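(* Let $S$ be a Rauzy scheme for a recurrent infinite word $W$, let $l$ be an admissible path in $S$ with $F(l)=u$, and let $u_1$ be a finite word with $uu_1\sqsubseteq W$. Then there is an admissible path $l'$ in $S$ such that $l$ is a prefix of $l'$ and $F(l')$ begins with $uu_1$. Symmetrically, if $u_1u\sqsubseteq W$, there is an admissible path $l'$ such that $l$ is a suffix of $l'$ and $F(l')$ ends with $u_1u$.
   Context: An infinite word $W$ is recurrent if every factor occurs infinitely often. $u\sqsubseteq w$: $u$ is a factor of $w$; $u\sqsubseteq_k w$: $u$ occurs in $w$ at least $k$ times. A graph with words is a strongly connected finite directed graph (multiple edges and loops allowed) in which every edge $e$ carries a front word $F(e)$ and a back word $B(e)$, and every vertex either has in-degree $1$ and out-degree $>1$ (distributing vertex) or in-degree $>1$ and out-degree $1$ (collecting vertex). A path is a finite nonempty sequence of edges $v_1\dots v_n$ with each $v_{i+1}$ starting where $v_i$ ends; subpaths, prefixes, suffixes and $s_1\sqsubseteq_k s_2$ are defined via edge records (the word $v_1\dots v_n$ over the alphabet of edges). A path is symmetric if its first edge starts at a collecting vertex and its last edge ends at a distributing vertex. For $s=v_1\dots v_n$, $F(s)$ is the concatenation, in order, of the front words of $v_1$ and of all $v_i$ ($i\ge2$) starting at a distributing vertex; $B(s)$ is the concatenation, in order, of the back words of all $v_i$ ($i\le n-1$) ending at a collecting vertex and of $v_n$. A Rauzy scheme for $W$ is a graph with words such that: (1) it has more than one edge; (2) front words of edges leaving a common distributing vertex have pairwise distinct first letters, and back words of edges entering a common collecting vertex have pairwise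 distinct last letters; (3) $F(s)=B(s)$ for every symmetric path $s$; (4) for symmetric paths $s_1,s_2$ and $k\ge1$, $F(s_1)\sqsubseteq_k F(s_2)$ implies $s_1\sqsubseteq_k s_2$; (5) all words on edges are factors of $W$; (6) every factor of $W$ is a factor of $F(s)$ for some symmetric path $s$; (7) for every edge $e$ there is a factor $u_e$ of $W$ such that every symmetric path $s$ with $u_e\sqsubseteq F(s)$ passes through $e$. A symmetric path $s$ is admissible if $F(s)\sqsubseteq W$. *)

theory Defs
  imports Main "HOL-Library.Sublist"
begin

definition factor_inf :: "'a list \<Rightarrow> (nat \<Rightarrow> 'a) \<Rightarrow> bool" where
  "factor_inf u W \<longleftrightarrow> (\<exists>i. u = map W [i..<i + length u])"

definition recurrent :: "(nat \<Rightarrow> 'a) \<Rightarrow> bool" where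
  "recurrent W \<longleftrightarrow>
     (\<forall>u. factor_inf u W \<longrightarrow> infinite {i. map W [i..<i + length u] = u})"

definition occ_count :: "'a list \<Rightarrow> 'a list \<Rightarrow> nat" where
  "occ_count u w = card {i. i + length u \<le> length w \<and> take (length u) (drop i w) = u}"

text \<open>A graph is given by a vertex set V, an edge set E (edges are abstract, so multiple
  edges and loops are allowed), source/target maps src, tgt, and front/back words fr, bk.\<close>

definition indeg :: "'e set \<Rightarrow> ('e \<Rightarrow> 'v) \<Rightarrow> 'v \<Rightarrow> nat" where
  "indeg E tgt v = card {e\<in>E. tgt e = v}"

definition outdeg :: "'e set \<Rightarrow> ('e \<Rightarrow> 'v) \<Rightarrow> 'v \<Rightarrow> nat" where
  "outdeg E src v = card {e\<in>E. src e = v}"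

definition distributing :: "'e set \<Rightarrow> ('e \<Rightarrow> 'v) \<Rightarrow> ('e \<Rightarrow> 'v) \<Rightarrow> 'v \<Rightarrow> bool" where
  "distributing E src tgt v \<longleftrightarrow> indeg E tgt v = 1 \<and> outdeg E src v > 1"

definition collecting :: "'e set \<Rightarrow> ('e \<Rightarrow> 'v) \<Rightarrow> ('e \<Rightarrow> 'v) \<Rightarrow> 'v \<Rightarrow> bool" where
  "collecting E src tgt v \<longleftrightarrow> indeg E tgt v > 1 \<and> outdeg E src v = 1"

definition graph_with_words ::
  "'v set \<Rightarrow> 'e set \<Rightarrow> ('e \<Rightarrow> 'v) \<Rightarrow> ('e \<Rightarrow> 'v) \<Rightarrow> bool" where
  "graph_with_words V E src tgt \<longleftrightarrow>
     finite V \<and> finite E \<and>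
     (\<forall>e\<in>E. src e \<in> V \<and> tgt e \<in> V) \<and>
     (\<forall>v\<in>V. \<forall>w\<in>V. (v, w) \<in> {(src e, tgt e) | e. e \<in> E}\<^sup>*) \<and>
     (\<forall>v\<in>V. distributing E src tgt v \<or> collecting E src tgt v)"

definition is_path :: "'e set \<Rightarrow> ('e \<Rightarrow> 'v) \<Rightarrow> ('e \<Rightarrow> 'v) \<Rightarrow> 'e list \<Rightarrow> bool" where
  "is_path E src tgt s \<longleftrightarrow>
     s \<noteq> [] \<and> set s \<subseteq> E \<and> (\<forall>i. Suc i < length s \<longrightarrow> tgt (s ! i) = src (s ! Suc i))"

definition symmetric_path :: "'e set \<Rightarrow> ('e \<Rightarrow> 'v) \<Rightarrow> ('e \<Rightarrow> 'v) \<Rightarrow> 'e list \<Rightarrow> bool" where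
  "symmetric_path E src tgt s \<longleftrightarrow>
     is_path E src tgt s \<and> collecting E src tgt (src (hd s)) \<and>
     distributing E src tgt (tgt (last s))"

definition Fw :: "'e set \<Rightarrow> ('e \<Rightarrow> 'v) \<Rightarrow> ('e \<Rightarrow> 'v) \<Rightarrow> ('e \<Rightarrow> 'a list) \<Rightarrow> 'e list \<Rightarrow> 'a list" where
  "Fw E src tgt fr s =
     fr (hd s) @ concat (map fr (filter (\<lambda>e. distributing E src tgt (src e)) (tl s)))"

definition Bw :: "'e set \<Rightarrow> ('e \<Rightarrow> 'v) \<Rightarrow> ('e \<Rightarrow> 'v) \<Rightarrow> ('e \<Rightarrow> 'a list) \<Rightarrow> 'e list \<Rightarrow> 'a list" where
  "Bw E src tgt bk s =
     concat (map bk (filter (\<lambda>e. collecting E src tgt (tgt e)) (butlast s))) @ bk (last s)"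

definition rauzy_scheme ::
  "(nat \<Rightarrow> 'a) \<Rightarrow> 'v set \<Rightarrow> 'e set \<Rightarrow> ('e \<Rightarrow> 'v) \<Rightarrow> ('e \<Rightarrow> 'v)
     \<Rightarrow> ('e \<Rightarrow> 'a list) \<Rightarrow> ('e \<Rightarrow> 'a list) \<Rightarrow> bool" where
  "rauzy_scheme W V E src tgt fr bk \<longleftrightarrow>
     graph_with_words V E src tgt \<and>
     \<comment> \<open>(1)\<close>
     card E > 1 \<and>
     \<comment> \<open>(2)\<close>
     (\<forall>e\<in>E. \<forall>e'\<in>E. e \<noteq> e' \<and> src e = src e' \<and> distributing E src tgt (src e) \<longrightarrow>
        fr e \<noteq> [] \<and> fr e' \<noteq> [] \<and> hd (fr e) \<noteq> hd (fr e')) \<and>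
     (\<forall>e\<in>E. \<forall>e'\<in>E. e \<noteq> e' \<and> tgt e = tgt e' \<and> collecting E src tgt (tgt e) \<longrightarrow>
        bk e \<noteq> [] \<and> bk e' \<noteq> [] \<and> last (bk e) \<noteq> last (bk e')) \<and>
     \<comment> \<open>(3)\<close>
     (\<forall>s. symmetric_path E src tgt s \<longrightarrow> Fw E src tgt fr s = Bw E src tgt bk s) \<and>
     \<comment> \<open>(4)\<close>
     (\<forall>s1 s2 k. symmetric_path E src tgt s1 \<and> symmetric_path E src tgt s2 \<and> k \<ge> 1 \<and>
        occ_count (Fw E src tgt fr s1) (Fw E src tgt fr s2) \<ge> k \<longrightarrow> occ_count s1 s2 \<ge> k) \<and>
     \<comment> \<open>(5)\<close>
     (\<forall>e\<in>E. factor_inf (fr e) W \<and> factor_inf (bk e) W) \<and>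
     \<comment> \<open>(6)\<close>
     (\<forall>u. factor_inf u W \<longrightarrow>
        (\<exists>s. symmetric_path E src tgt s \<and> sublist u (Fw E src tgt fr s))) \<and>
     \<comment> \<open>(7)\<close>
     (\<forall>e\<in>E. \<exists>ue. factor_inf ue W \<and>
        (\<forall>s. symmetric_path E src tgt s \<and> sublist ue (Fw E src tgt fr s) \<longrightarrow> e \<in> set s))"

definition admissible ::
  "(nat \<Rightarrow> 'a) \<Rightarrow> 'e set \<Rightarrow> ('e \<Rightarrow> 'v) \<Rightarrow> ('e \<Rightarrow> 'v) \<Rightarrow> ('e \<Rightarrow> 'a list) \<Rightarrow> 'e list \<Rightarrow> bool" where
  "admissible W E src tgt fr s \<longleftrightarrow>
     symmetric_path E src tgt s \<and> factor_inf (Fw E src tgt fr s) W"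

end

theory Submission
  imports Defs "HOL-Library.Infinite_Set"
begin

(* Enlarge u u1 on the
   right by M further letters of W, where M bounds the lengths of all edge words, and use
   axiom (6) to find a symmetric path s whose front word contains u u1 z.  Axioms (3) and (4)
   force every occurrence of F(l) in F(s) to come from an occurrence of l in s
   ("locate_occurrence"), so s = p l q with F(s) = H(p) u G(q) and G(q) = u1 z b.  Walking
   along q edge by edge, the word G grows by at most M letters per step and only at
   distributing vertices; the first distributing stop after having read u1 gives a prefix
   l' = l q' which is symmetric and satisfies F(l') = u u1 z' with z' a prefix of z
   ("truncate_right").  F(l') is then a factor of W, so l' is admissible.  The left
   extension is the mirror image, walking backwards through p; it uses recurrence of W to
   find an occurrence of u1 u preceded by M letters. *)

definition occs :: "'a list \<Rightarrow> 'a list \<Rightarrow> nat set" where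
  "occs u w = {i. i + length u \<le> length w \<and> take (length u) (drop i w) = u}"

lemma occ_count_occs: "occ_count u w = card (occs u w)"
  by (simp add: occ_count_def occs_def)

lemma finite_occs: "finite (occs u w)"
  by (rule finite_subset[of _ "{..length w}"]) (auto simp: occs_def)

lemma occs_append: "length a \<in> occs u (a @ u @ b)"
  by (simp add: occs_def)

lemma occs_split:
  assumes "i \<in> occs u w"
  obtains p q where "w = p @ u @ q" "length p = i"
proof
  show "w = take i w @ u @ drop (i + length u) w"
    using assms unfolding occs_def
    by (metis (mono_tags) append_take_drop_id drop_drop mem_Collect_eq add.commute)
  show "length (take i w) = i" using assms by (auto simp: occs_def)
qed

lemma prefix_between:
  assumes "prefix x (u @ z @ b)" "length u \<le> length x" "length x \<le> length u + length z"
  shows "\<exists>d. x = u @ take d z"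
proof -
  obtain zs where "u @ z @ b = x @ zs" using assms(1) by (auto simp: prefix_def)
  hence "x = take (length x) (u @ z @ b)" by simp
  also have "\<dots> = u @ take (length x - length u) z" using assms(2,3) by simp
  finally show ?thesis by blast
qed

lemma suffix_between:
  assumes "suffix y (a @ z @ u)" "length u \<le> length y" "length y \<le> length z + length u"
  shows "\<exists>d. y = drop d z @ u"
proof -
  let ?w = "a @ z @ u"
  obtain zs where "?w = zs @ y" using assms(1) by (auto simp: suffix_def)
  hence "y = drop (length ?w - length y) ?w" by simp
  also have "\<dots> = drop (length z + length u - length y) z @ u" using assms(2,3) by simp
  finally show ?thesis by blast
qed

lemma factor_inf_nth: "factor_inf u W \<longleftrightarrow> (\<exists>i. \<forall>k<length u. u ! k = W (i + k))"
proof
  assume "factor_inf u W"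
  then obtain i where "u = map W [i..<i + length u]" unfolding factor_inf_def by blast
  hence "\<forall>k<length u. u ! k = W (i + k)" by (metis add_diff_cancel_left' nth_map_upt)
  thus "\<exists>i. \<forall>k<length u. u ! k = W (i + k)" by blast
next
  assume "\<exists>i. \<forall>k<length u. u ! k = W (i + k)"
  then obtain i where h: "\<forall>k<length u. u ! k = W (i + k)" by blast
  have "u = map W [i..<i + length u]" by (rule nth_equalityI) (auto simp: h)
  thus "factor_inf u W" unfolding factor_inf_def by blast
qed

lemma factor_inf_sublist:
  assumes "sublist a b" "factor_inf b W"
  shows "factor_inf a W"
proof -
  obtain x y where b: "b = x @ a @ y" using assms(1) unfolding sublist_def by blast
  obtain i where h: "\<forall>k<length b. b ! k = W (i + k)" using assms(2) factor_inf_nth by blast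
  have "\<forall>k<length a. a ! k = W (i + length x + k)"
  proof (intro allI impI)
    fix k assume k: "k < length a"
    have "a ! k = b ! (length x + k)" using k by (simp add: b nth_append)
    also have "\<dots> = W (i + (length x + k))" using h[rule_format, of "length x + k"] k b by simp
    finally show "a ! k = W (i + length x + k)" by (simp add: add.assoc)
  qed
  thus ?thesis using factor_inf_nth by blast
qed

lemma factor_inf_extend_right:
  assumes "factor_inf u W"
  shows "\<exists>z. length z = M \<and> factor_inf (u @ z) W"
proof -
  obtain i where u: "map W [i..<i + length u] = u" using assms unfolding factor_inf_def by metis
  define z where "z = map W [i + length u..<i + length u + M]"
  have "[i..<i + length u + M] = [i..<i + length u] @ [i + length u..<i + length u + M]"
    by (rule upt_add_eq_append) simp
  hence "map W [i..<i + length u + M] = u @ z" by (simp add: z_def u)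
  hence "u @ z = map W [i..<i + length (u @ z)]" by (simp add: z_def add.assoc)
  hence "factor_inf (u @ z) W" unfolding factor_inf_def by blast
  thus ?thesis by (intro exI[of _ z]) (simp add: z_def)
qed

text \<open>In a recurrent word every factor also occurs arbitrarily far to the right, hence it
  can be continued to the left by any number of letters.\<close>

lemma factor_inf_extend_left:
  assumes rec: "recurrent W" and u: "factor_inf u W"
  shows "\<exists>z. length z = M \<and> factor_inf (z @ u) W"
proof -
  have "infinite {i. map W [i..<i + length u] = u}" using rec u unfolding recurrent_def by blast
  then obtain i where i: "M \<le> i" "map W [i..<i + length u] = u"
    unfolding infinite_nat_iff_unbounded_le by blast
  define z where "z = map W [i - M..<i]"
  have lz: "length z = M" using i(1) by (simp add: z_def)
  have "[i - M..<i + length u] = [i - M..<i] @ [i..<i + length u]"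
    by (rule upt_add_eq_append) (use i(1) in simp)
  moreover have "i - M + length (z @ u) = i + length u" using i(1) lz by simp
  ultimately have "z @ u = map W [i - M..<i - M + length (z @ u)]" using i(2) by (simp add: z_def)
  hence "factor_inf (z @ u) W" unfolding factor_inf_def by blast
  thus ?thesis using lz by blast
qed

section \<open>A discrete intermediate-value lemma\<close>

lemma constant_between_stops:
  fixes f :: "nat \<Rightarrow> nat"
  assumes "\<And>k. a \<le> k \<Longrightarrow> k < b \<Longrightarrow> f (Suc k) = f k" and "a \<le> b"
  shows "f b = f a"
  using assms by (induction b) (auto simp: le_Suc_eq)

lemma stop_in_window:
  fixes f :: "nat \<Rightarrow> nat"
  assumes "D N" "T \<le> f N" "f 0 \<le> T"
    and steps: "\<And>k. k < N \<Longrightarrow> f k \<le> f (Suc k) \<and> f (Suc k) \<le> f k + M"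
    and moves_at_stops: "\<And>k. k < N \<Longrightarrow> \<not> D k \<Longrightarrow> f (Suc k) = f k"
  shows "\<exists>k\<le>N. D k \<and> T \<le> f k \<and> f k \<le> T + M"
proof -
  define k0 where "k0 = (LEAST k. T \<le> f k)"
  have k0N: "k0 \<le> N" unfolding k0_def using assms(2) by (rule Least_le)
  have Tk0: "T \<le> f k0" unfolding k0_def using assms(2) by (rule LeastI)
  have k0M: "f k0 \<le> T + M"
  proof (cases k0)
    case (Suc m)
    have "\<not> T \<le> f m" unfolding k0_def by (rule not_less_Least) (simp add: Suc k0_def[symmetric])
    thus ?thesis using steps[of m] Suc k0N by simp
  qed (use assms(3) in simp)
  define k1 where "k1 = (LEAST k. k0 \<le> k \<and> D k)"
  have k1: "k0 \<le> k1" "D k1" "k1 \<le> N"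
    unfolding k1_def using k0N assms(1) by (auto intro: LeastI2[of _ N] Least_le)
  have "f k1 = f k0"
  proof (rule constant_between_stops[where f = f])
    fix k assume "k0 \<le> k" "k < k1"
    hence "\<not> D k" unfolding k1_def using not_less_Least by blast
    thus "f (Suc k) = f k" using moves_at_stops \<open>k < k1\<close> k1(3) by simp
  qed (rule k1(1))
  thus ?thesis using k1 Tk0 k0M by auto
qed

section \<open>Words read along a path\<close>

text \<open>They describe how
  F grows to the right and B grows to the left.\<close>

definition Gw :: "'e set \<Rightarrow> ('e \<Rightarrow> 'v) \<Rightarrow> ('e \<Rightarrow> 'v) \<Rightarrow> ('e \<Rightarrow> 'a list) \<Rightarrow> 'e list \<Rightarrow> 'a list" where
  "Gw E src tgt fr x = concat (map fr (filter (\<lambda>e. distributing E src tgt (src e)) x))"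

definition Hw :: "'e set \<Rightarrow> ('e \<Rightarrow> 'v) \<Rightarrow> ('e \<Rightarrow> 'v) \<Rightarrow> ('e \<Rightarrow> 'a list) \<Rightarrow> 'e list \<Rightarrow> 'a list" where
  "Hw E src tgt bk x = concat (map bk (filter (\<lambda>e. collecting E src tgt (tgt e)) x))"

lemma Gw_simps [simp]:
  "Gw E src tgt fr [] = []"
  "Gw E src tgt fr (e # x) = (if distributing E src tgt (src e) then fr e else []) @ Gw E src tgt fr x"
  "Gw E src tgt fr (a @ b) = Gw E src tgt fr a @ Gw E src tgt fr b"
  by (simp_all add: Gw_def)

lemma Hw_simps [simp]:
  "Hw E src tgt bk [] = []"
  "Hw E src tgt bk (e # x) = (if collecting E src tgt (tgt e) then bk e else []) @ Hw E src tgt bk x"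
  "Hw E src tgt bk (a @ b) = Hw E src tgt bk a @ Hw E src tgt bk b"
  by (simp_all add: Hw_def)

lemma Hw_take_mono:
  assumes "i \<le> j"
  shows "length (Hw E src tgt bk (take i s)) \<le> length (Hw E src tgt bk (take j s))"
proof -
  have "take j s = take i s @ take (j - i) (drop i s)" using assms by (metis le_add_diff_inverse take_add)
  thus ?thesis by simp
qed

lemma Fw_append: "a \<noteq> [] \<Longrightarrow> Fw E src tgt fr (a @ b) = Fw E src tgt fr a @ Gw E src tgt fr b"
  by (cases a) (simp_all add: Fw_def Gw_def)

lemma Bw_append: "b \<noteq> [] \<Longrightarrow> Bw E src tgt bk (a @ b) = Hw E src tgt bk a @ Bw E src tgt bk b"
  by (simp add: Bw_def Hw_def butlast_append)

lemma is_path_take: "is_path E src tgt s \<Longrightarrow> 0 < n \<Longrightarrow> is_path E src tgt (take n s)"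
  unfolding is_path_def using set_take_subset by fastforce

lemma is_path_drop: "is_path E src tgt s \<Longrightarrow> n < length s \<Longrightarrow> is_path E src tgt (drop n s)"
  unfolding is_path_def using set_drop_subset by fastforce

lemma is_path_appendD:
  assumes "is_path E src tgt (xs @ ys)"
  shows "xs \<noteq> [] \<Longrightarrow> is_path E src tgt xs" and "ys \<noteq> [] \<Longrightarrow> is_path E src tgt ys"
  using is_path_take[OF assms, of "length xs"] is_path_drop[OF assms, of "length xs"] by auto

lemma is_path_link:
  assumes "is_path E src tgt (xs @ ys)" "xs \<noteq> []" "ys \<noteq> []"
  shows "tgt (last xs) = src (hd ys)"
proof -
  let ?i = "length xs - 1"
  have "Suc ?i < length (xs @ ys)" using assms(2,3) by (cases xs; cases ys) auto
  hence "tgt ((xs @ ys) ! ?i) = src ((xs @ ys) ! Suc ?i)" using assms(1) unfolding is_path_def by blast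
  thus ?thesis using assms(2,3) by (simp add: last_conv_nth hd_conv_nth nth_append)
qed

lemma symmetric_path_infix:
  assumes s: "symmetric_path E src tgt (p @ l @ q)" and l: "symmetric_path E src tgt l"
  shows "symmetric_path E src tgt (p @ l)" and "symmetric_path E src tgt (l @ q)"
proof -
  have lne: "l \<noteq> []" using l unfolding symmetric_path_def is_path_def by blast
  have ps: "is_path E src tgt ((p @ l) @ q)" "is_path E src tgt (p @ (l @ q))"
    using s unfolding symmetric_path_def by simp_all
  show "symmetric_path E src tgt (p @ l)"
    using is_path_appendD(1)[OF ps(1)] s l lne
    unfolding symmetric_path_def by (cases p) auto
  show "symmetric_path E src tgt (l @ q)"
    using is_path_appendD(2)[OF ps(2)] s l lne
    unfolding symmetric_path_def by (cases q) auto
qed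

section \<open>Truncating a path at a stop\<close>

lemma truncate_right:
  assumes l: "symmetric_path E src tgt l" and lq: "symmetric_path E src tgt (l @ q)"
    and M: "\<forall>e\<in>E. length (fr e) \<le> M" and n: "n \<le> length (Gw E src tgt fr q)"
  shows "\<exists>k. symmetric_path E src tgt (l @ take k q) \<and>
             n \<le> length (Gw E src tgt fr (take k q)) \<and> length (Gw E src tgt fr (take k q)) \<le> n + M"
proof -
  have lne: "l \<noteq> []" using l unfolding symmetric_path_def is_path_def by blast
  have plq: "is_path E src tgt (l @ q)" using lq unfolding symmetric_path_def by blast
  define f where "f k = length (Gw E src tgt fr (take k q))" for k
  define D where "D k = distributing E src tgt (tgt (last (l @ take k q)))" for k
  have step: "take (Suc k) q = take k q @ [q ! k]" "tgt (last (l @ take k q)) = src (q ! k)"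
    if "k < length q" for k
  proof -
    show "take (Suc k) q = take k q @ [q ! k]" using that by (simp add: take_Suc_conv_app_nth)
    have "is_path E src tgt ((l @ take k q) @ drop k q)" using plq by simp
    thus "tgt (last (l @ take k q)) = src (q ! k)"
      using is_path_link[of E src tgt "l @ take k q" "drop k q"] lne that by (simp add: hd_drop_conv_nth)
  qed
  have "\<exists>k\<le>length q. D k \<and> n \<le> f k \<and> f k \<le> n + M"
  proof (rule stop_in_window)
    show "D (length q)" using lq unfolding D_def symmetric_path_def by simp
    show "n \<le> f (length q)" "f 0 \<le> n" using n by (simp_all add: f_def)
  next
    fix k assume k: "k < length q"
    have "q ! k \<in> E" using plq k unfolding is_path_def by auto
    thus "f k \<le> f (Suc k) \<and> f (Suc k) \<le> f k + M" using M step[OF k] by (auto simp: f_def)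
  next
    fix k assume "k < length q" "\<not> D k"
    thus "f (Suc k) = f k" using step unfolding f_def D_def by simp
  qed
  then obtain k where k: "k \<le> length q" "D k" "n \<le> f k" "f k \<le> n + M" by blast
  have "is_path E src tgt (l @ take k q)"
    using is_path_take[OF plq, of "length l + k"] lne by simp
  hence "symmetric_path E src tgt (l @ take k q)"
    using l k(2) lne unfolding symmetric_path_def D_def by simp
  thus ?thesis using k(3,4) unfolding f_def by blast
qed

lemma truncate_left:
  assumes l: "symmetric_path E src tgt l" and pl: "symmetric_path E src tgt (p @ l)"
    and M: "\<forall>e\<in>E. length (bk e) \<le> M" and n: "n \<le> length (Hw E src tgt bk p)"
  shows "\<exists>k. symmetric_path E src tgt (drop k p @ l) \<and>
             n \<le> length (Hw E src tgt bk (drop k p)) \<and> length (Hw E src tgt bk (drop k p)) \<le> n + M"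
proof -
  have lne: "l \<noteq> []" using l unfolding symmetric_path_def is_path_def by blast
  have ppl: "is_path E src tgt (p @ l)" using pl unfolding symmetric_path_def by blast
  define N where "N = length p"
  define f where "f k = length (Hw E src tgt bk (drop (N - k) p))" for k
  define D where "D k = collecting E src tgt (src (hd (drop (N - k) p @ l)))" for k
  have step: "drop (N - Suc k) p = p ! (N - Suc k) # drop (N - k) p"
    "tgt (p ! (N - Suc k)) = src (hd (drop (N - k) p @ l))" if "k < N" for k
  proof -
    have Sm: "Suc (N - Suc k) = N - k" and m: "N - Suc k < length p" using that N_def by auto
    show "drop (N - Suc k) p = p ! (N - Suc k) # drop (N - k) p"
      using Cons_nth_drop_Suc[OF m] Sm by simp
    have "is_path E src tgt (take (N - k) p @ (drop (N - k) p @ l))"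
      using ppl by (metis append_take_drop_id append.assoc)
    hence "tgt (last (take (N - k) p)) = src (hd (drop (N - k) p @ l))"
      using is_path_link lne that N_def by fastforce
    moreover have "last (take (N - k) p) = p ! (N - Suc k)"
      using m Sm by (metis take_Suc_conv_app_nth last_snoc)
    ultimately show "tgt (p ! (N - Suc k)) = src (hd (drop (N - k) p @ l))" by simp
  qed
  have "\<exists>k\<le>N. D k \<and> n \<le> f k \<and> f k \<le> n + M"
  proof (rule stop_in_window)
    show "D N" using pl unfolding D_def symmetric_path_def by simp
    show "n \<le> f N" "f 0 \<le> n" using n by (simp_all add: f_def N_def)
  next
    fix k assume k: "k < N"
    have "p ! (N - Suc k) \<in> E" using ppl k N_def unfolding is_path_def by auto
    thus "f k \<le> f (Suc k) \<and> f (Suc k) \<le> f k + M" using M step[OF k] by (auto simp: f_def)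
  next
    fix k assume "k < N" "\<not> D k"
    thus "f (Suc k) = f k" using step unfolding f_def D_def by simp
  qed
  then obtain k where k: "k \<le> N" "D k" "n \<le> f k" "f k \<le> n + M" by blast
  have "is_path E src tgt (drop (N - k) p @ l)"
    using is_path_drop[OF ppl, of "N - k"] lne N_def by (cases l) auto
  hence "symmetric_path E src tgt (drop (N - k) p @ l)"
    using l k(2) lne unfolding symmetric_path_def D_def by simp
  thus ?thesis using k(3,4) unfolding f_def by blast
qed

section \<open>Rauzy schemes\<close>

locale rauzy =
  fixes W :: "nat \<Rightarrow> 'a" and V :: "'v set" and E :: "'e set"
    and src tgt :: "'e \<Rightarrow> 'v" and fr bk :: "'e \<Rightarrow> 'a list"
  assumes scheme: "rauzy_scheme W V E src tgt fr bk"
begin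

abbreviation "spath \<equiv> symmetric_path E src tgt"
abbreviation "F \<equiv> Fw E src tgt fr"
abbreviation "G \<equiv> Gw E src tgt fr"
abbreviation "H \<equiv> Hw E src tgt bk"

lemma finite_edges: "finite E"
  using scheme unfolding rauzy_scheme_def graph_with_words_def by blast

lemma collecting_back_words:
  "e \<in> E \<Longrightarrow> e' \<in> E \<Longrightarrow> e \<noteq> e' \<Longrightarrow> tgt e = tgt e' \<Longrightarrow> collecting E src tgt (tgt e) \<Longrightarrow> bk e \<noteq> []"
  using scheme unfolding rauzy_scheme_def by blast

lemma F_eq_B: "spath s \<Longrightarrow> F s = Bw E src tgt bk s"
  using scheme unfolding rauzy_scheme_def by blast

lemma occurrences_reflected:
  "spath s1 \<Longrightarrow> spath s2 \<Longrightarrow> 1 \<le> k \<Longrightarrow> k \<le> occ_count (F s1) (F s2) \<Longrightarrow> k \<le> occ_count s1 s2"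
  using scheme unfolding rauzy_scheme_def by blast

lemma factor_in_front_word: "factor_inf u W \<Longrightarrow> \<exists>s. spath s \<and> sublist u (F s)"
  using scheme unfolding rauzy_scheme_def by blast

lemma edge_word_bound: "\<exists>M. \<forall>e\<in>E. length (fr e) \<le> M \<and> length (bk e) \<le> M"
proof -
  define M where "M = Max ((\<lambda>e. length (fr e) + length (bk e)) ` E)"
  have "length (fr e) + length (bk e) \<le> M" if "e \<in> E" for e
    unfolding M_def using finite_edges that by (intro Max_ge) auto
  hence "\<forall>e\<in>E. length (fr e) \<le> M \<and> length (bk e) \<le> M" by fastforce
  thus ?thesis by blast
qed

text \<open>An edge entering a collecting vertex carries a nonempty back word: the vertex has a
  second incoming edge, and axiom (2) separates their back words.\<close>

lemma bk_nonempty: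
  assumes e: "e \<in> E" and c: "collecting E src tgt (tgt e)"
  shows "bk e \<noteq> []"
proof -
  let ?In = "{e'\<in>E. tgt e' = tgt e}"
  have "1 < card ?In" using c unfolding collecting_def indeg_def by blast
  hence "?In \<noteq> {e}" by auto
  moreover have "e \<in> ?In" using e by simp
  ultimately obtain e' where e': "e' \<in> ?In" "e' \<noteq> e" by blast
  show ?thesis using collecting_back_words[OF e _ _ _ c, of e'] e' by simp
qed

text \<open>The front word of a symmetric path p l q around a symmetric l: by (3) the part p l
  can be read backwards, so F(p l q) = H(p) F(l) G(q).\<close>

lemma F_decomp:
  assumes s: "spath (p @ l @ q)" and l: "spath l"
  shows "F (p @ l @ q) = H p @ F l @ G q"
proof -
  have lne: "l \<noteq> []" using l unfolding symmetric_path_def is_path_def by blast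
  have "F (p @ l) = Bw E src tgt bk (p @ l)" using F_eq_B symmetric_path_infix(1)[OF s l] .
  also have "\<dots> = H p @ F l" using Bw_append[OF lne] F_eq_B[OF l] by simp
  finally show ?thesis using Fw_append[of "p @ l" E src tgt fr q] lne by simp
qed

text \<open>Before an occurrence of a symmetric l, the last edge enters a collecting vertex, so
  H strictly grows; distinct occurrences of l thus give distinct occurrences of F(l).\<close>

lemma H_grows_to_occurrence:
  assumes s: "spath s" and l: "spath l" and j: "j \<in> occs l s" and ij: "i < j"
  shows "length (H (take i s)) < length (H (take j s))"
proof -
  have lne: "l \<noteq> []" using l unfolding symmetric_path_def is_path_def by blast
  have ps: "is_path E src tgt s" using s unfolding symmetric_path_def by blast
  have occ: "j + length l \<le> length s" "take (length l) (drop j s) = l"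
    using j by (auto simp: occs_def)
  have js: "j < length s" using occ(1) lne by (cases l) auto
  have "hd l = hd (take (length l) (drop j s))" using occ(2) by simp
  also have "\<dots> = hd (drop j s)" using lne by simp
  finally have hd_eq: "hd (drop j s) = hd l" by simp
  have "Suc (j - 1) = j" using ij by simp
  hence tj: "take j s = take (j - 1) s @ [s ! (j - 1)]"
    using take_Suc_conv_app_nth[of "j - 1" s] js by simp
  have "tgt (last (take j s)) = src (hd (drop j s))"
    using is_path_link[of E src tgt "take j s" "drop j s"] ps ij js by force
  hence c: "collecting E src tgt (tgt (s ! (j - 1)))"
    using l hd_eq tj unfolding symmetric_path_def by simp
  have "s ! (j - 1) \<in> E" using ps js unfolding is_path_def by auto
  hence "bk (s ! (j - 1)) \<noteq> []" using bk_nonempty c by blast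
  hence "length (H (take (j - 1) s)) < length (H (take j s))" using tj c by simp
  moreover have "length (H (take i s)) \<le> length (H (take (j - 1) s))"
    by (rule Hw_take_mono) (use ij in simp)
  ultimately show ?thesis by simp
qed

text \<open>Axiom (4): every occurrence of F(l) in F(s) is the image of an occurrence of l in
  s.  The image map is injective, and (4) gives at least as many occurrences of l.\<close>

lemma occurrence_alignment:
  assumes s: "spath s" and l: "spath l" and j: "j \<in> occs (F l) (F s)"
  shows "\<exists>i\<in>occs l s. length (H (take i s)) = j"
proof -
  define h where "h i = length (H (take i s))" for i
  have img: "h ` occs l s \<subseteq> occs (F l) (F s)"
  proof
    fix x assume "x \<in> h ` occs l s"
    then obtain i where i: "i \<in> occs l s" "x = h i" by blast
    obtain p q where sd: "s = p @ l @ q" "length p = i" using occs_split[OF i(1)] .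
    have "F s = H p @ F l @ G q" using F_decomp[of p l q] s l sd(1) by simp
    moreover have "x = length (H p)" using i(2) sd unfolding h_def by simp
    ultimately show "x \<in> occs (F l) (F s)" using occs_append by simp
  qed
  have strict: "h i < h i'" if "i' \<in> occs l s" "i < i'" for i i'
    using H_grows_to_occurrence[OF s l that] unfolding h_def .
  have inj: "inj_on h (occs l s)" by (rule linorder_inj_onI') (use strict in fastforce)
  have "1 \<le> card (occs (F l) (F s))"
    using j finite_occs by (simp add: Suc_le_eq card_gt_0_iff) blast
  hence "card (occs (F l) (F s)) \<le> card (occs l s)"
    using occurrences_reflected[OF l s] unfolding occ_count_occs by simp
  hence "h ` occs l s = occs (F l) (F s)"
    using card_seteq[OF finite_occs img] card_image[OF inj] by simp
  then obtain i where "i \<in> occs l s" "j = h i" using j by blast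
  thus ?thesis unfolding h_def by blast
qed

lemma locate_occurrence:
  assumes s: "spath s" and l: "spath l" and Fs: "F s = a @ F l @ b"
  shows "\<exists>p q. s = p @ l @ q \<and> H p = a \<and> G q = b"
proof -
  have "length a \<in> occs (F l) (F s)" unfolding Fs by (rule occs_append)
  then obtain i where i: "i \<in> occs l s" "length (H (take i s)) = length a"
    using occurrence_alignment[OF s l] by blast
  obtain p q where sd: "s = p @ l @ q" "length p = i" using occs_split[OF i(1)] .
  have "F s = H p @ F l @ G q" using F_decomp[of p l q] s l sd(1) by simp
  hence "H p @ F l @ G q = a @ F l @ b" using Fs by simp
  moreover have "length (H p) = length a" using i(2) sd by simp
  ultimately have "H p = a" "G q = b" by simp_all
  thus ?thesis using sd(1) by blast
qed

lemma extend_right: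
  assumes adm: "admissible W E src tgt fr l" and fu: "factor_inf (F l @ u1) W"
  shows "\<exists>l'. admissible W E src tgt fr l' \<and> prefix l l' \<and> prefix (F l @ u1) (F l')"
proof -
  have l: "spath l" using adm unfolding admissible_def by blast
  have lne: "l \<noteq> []" using l unfolding symmetric_path_def is_path_def by blast
  obtain M where M: "\<forall>e\<in>E. length (fr e) \<le> M" using edge_word_bound by blast
  obtain z where z: "length z = M" "factor_inf (F l @ u1 @ z) W"
    using factor_inf_extend_right[OF fu] by auto
  obtain s where s: "spath s" "sublist (F l @ u1 @ z) (F s)"
    using factor_in_front_word z(2) by blast
  then obtain a b where "F s = a @ F l @ (u1 @ z @ b)" unfolding sublist_def by auto
  then obtain p q where pq: "s = p @ l @ q" "G q = u1 @ z @ b"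
    using locate_occurrence[OF s(1) l] by blast
  have lq: "spath (l @ q)" using symmetric_path_infix(2) s(1) pq(1) l by blast
  obtain k where k: "spath (l @ take k q)" "length u1 \<le> length (G (take k q))"
    "length (G (take k q)) \<le> length u1 + M"
    using truncate_right[OF l lq M, of "length u1"] pq(2) by auto
  have "G q = G (take k q) @ G (drop k q)"
    using Gw_simps(3)[of E src tgt fr "take k q" "drop k q"] by simp
  hence "prefix (G (take k q)) (u1 @ z @ b)" using pq(2) by (metis prefixI)
  then obtain d where d: "G (take k q) = u1 @ take d z"
    using prefix_between[of "G (take k q)" u1 z b] k(2,3) z(1) by auto
  have "F (l @ take k q) = F l @ G (take k q)" by (rule Fw_append[OF lne])
  with d have Fl': "F (l @ take k q) = F l @ u1 @ take d z" by simp
  have "prefix (F (l @ take k q)) (F l @ u1 @ z)" unfolding Fl' by (simp add: take_is_prefix)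
  hence "factor_inf (F (l @ take k q)) W" using factor_inf_sublist z(2) by blast
  hence "admissible W E src tgt fr (l @ take k q)" using k(1) unfolding admissible_def by blast
  moreover have "prefix l (l @ take k q)" by (rule prefixI) (rule refl)
  moreover have "prefix (F l @ u1) (F (l @ take k q))" unfolding Fl' by (rule prefixI) simp
  ultimately show ?thesis by blast
qed

text \<open>Left extension (second half of Lemma 3.5); recurrence supplies room on the left.\<close>

lemma extend_left:
  assumes rec: "recurrent W" and adm: "admissible W E src tgt fr l"
    and fu: "factor_inf (u1 @ F l) W"
  shows "\<exists>l'. admissible W E src tgt fr l' \<and> suffix l l' \<and> suffix (u1 @ F l) (F l')"
proof -
  have l: "spath l" using adm unfolding admissible_def by blast
  have lne: "l \<noteq> []" using l unfolding symmetric_path_def is_path_def by blast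
  obtain M where M: "\<forall>e\<in>E. length (bk e) \<le> M" using edge_word_bound by blast
  obtain z where z: "length z = M" "factor_inf (z @ u1 @ F l) W"
    using factor_inf_extend_left[OF rec fu] by auto
  obtain s where s: "spath s" "sublist (z @ u1 @ F l) (F s)"
    using factor_in_front_word z(2) by blast
  then obtain a b where "F s = (a @ z @ u1) @ F l @ b" unfolding sublist_def by auto
  then obtain p q where pq: "s = p @ l @ q" "H p = a @ z @ u1"
    using locate_occurrence[OF s(1) l] by blast
  have pl: "spath (p @ l)" using symmetric_path_infix(1) s(1) pq(1) l by blast
  obtain k where k: "spath (drop k p @ l)" "length u1 \<le> length (H (drop k p))"
    "length (H (drop k p)) \<le> length u1 + M"
    using truncate_left[OF l pl M, of "length u1"] pq(2) by auto
  have "H p = H (take k p) @ H (drop k p)"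
    using Hw_simps(3)[of E src tgt bk "take k p" "drop k p"] by simp
  hence "suffix (H (drop k p)) (a @ z @ u1)" using pq(2) by (metis suffixI)
  then obtain d where d: "H (drop k p) = drop d z @ u1"
    using suffix_between[of "H (drop k p)" a z u1] k(2,3) z(1) by auto
  have "F (drop k p @ l) = Bw E src tgt bk (drop k p @ l)" using F_eq_B[OF k(1)] .
  also have "\<dots> = H (drop k p) @ Bw E src tgt bk l" by (rule Bw_append[OF lne])
  also have "\<dots> = drop d z @ u1 @ F l" using d F_eq_B[OF l] by simp
  finally have Fl': "F (drop k p @ l) = drop d z @ u1 @ F l" .
  have "suffix (F (drop k p @ l)) (z @ u1 @ F l)" unfolding Fl' by (simp add: suffix_drop)
  hence "factor_inf (F (drop k p @ l)) W" using factor_inf_sublist z(2) by blast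
  hence "admissible W E src tgt fr (drop k p @ l)" using k(1) unfolding admissible_def by blast
  moreover have "suffix l (drop k p @ l)" by (rule suffixI) (rule refl)
  moreover have "suffix (u1 @ F l) (F (drop k p @ l))" unfolding Fl' by (rule suffixI) simp
  ultimately show ?thesis by blast
qed

end

theorem lemma3p5:
  fixes W :: "nat \<Rightarrow> 'a" and V :: "'v set" and E :: "'e set"
    and src tgt :: "'e \<Rightarrow> 'v" and fr bk :: "'e \<Rightarrow> 'a list"
    and l :: "'e list" and u u1 :: "'a list"
  assumes "recurrent W"
    and "rauzy_scheme W V E src tgt fr bk"
    and "admissible W E src tgt fr l"
    and "Fw E src tgt fr l = u"
  shows "(factor_inf (u @ u1) W \<longrightarrow>
            (\<exists>l'. admissible W E src tgt fr l' \<and> prefix l l' \<and>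
                  prefix (u @ u1) (Fw E src tgt fr l')))
       \<and> (factor_inf (u1 @ u) W \<longrightarrow>
            (\<exists>l'. admissible W E src tgt fr l' \<and> suffix l l' \<and>
                  suffix (u1 @ u) (Fw E src tgt fr l')))"
proof -
  interpret rauzy W V E src tgt fr bk by (rule rauzy.intro) (rule assms(2))
  show ?thesis
    using extend_right[OF assms(3), of u1] extend_left[OF assms(1,3), of u1] assms(4) by blast
qed

end
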